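(* Let $\mathsf{T}$ be a quantifier-free set theory extending $\mathsf{MLS}$ (its literals include all $\mathsf{MLS}$ literals, in particular membership literals $x\in y$ between set variables). Suppose $\mathsf{T}$ contains a conjunction of literals $\varphi$ with a designated variable $\bar x$ such that, for some integer $k\ge2$: every set assignment satisfying $\varphi$ assigns to $\bar x$ a set of cardinality at most $k$, and some set assignment satisfying $\varphi$ assigns to $\bar x$ a set of cardinality exactly $k$. Then $\mathsf{T}$ is not convex.
   Context: $\mathsf{MLS}$ is the quantifier-free propositional closure of atoms $x=\varnothing$, $x=y$, $x\subseteq y$, $x\in y$, $x=y\setminus z$, $x=y\cup z$, $x=y\cap z$ over set variables, interpreted by set assignments, i.e. maps from finitely many set variables into the von Neumann universe, with the usual meaning of the symbols. A theory of this kind is convex if for every conjunction of its literals $\psi$ and every finite nonempty set $\mathcal{E}$ of equalities between variables, whenever every set assignment satisfying $\psi$ satisfies $\bigvee\mathcal{E}$, there is some $x=y$ in $\mathcal{E}$ satisfied by every set assignment satisfying $\psi$. *)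

theory Defs
  imports Main
begin

definition set_universe :: "('v \<Rightarrow> 'v \<Rightarrow> bool) \<Rightarrow> bool" where
  "set_universe mem \<longleftrightarrow>
     (\<forall>a b. (\<forall>z. mem z a \<longleftrightarrow> mem z b) \<longrightarrow> a = b) \<and> wfP mem"

definition elems :: "('v \<Rightarrow> 'v \<Rightarrow> bool) \<Rightarrow> 'v \<Rightarrow> 'v set" where
  "elems mem s = {z. mem z s}"

datatype 'x mls_atom =
    EmptyA 'x
  | EqA 'x 'x
  | SubA 'x 'x
  | MemA 'x 'x
  | DiffA 'x 'x 'x
  | UnA 'x 'x 'x
  | IntA 'x 'x 'x

datatype 'x mls_lit = Pos "'x mls_atom" | Neg "'x mls_atom"

fun mls_atom_holds :: "('v \<Rightarrow> 'v \<Rightarrow> bool) \<Rightarrow> ('x \<Rightarrow> 'v) \<Rightarrow> 'x mls_atom \<Rightarrow> bool" where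
  "mls_atom_holds mem \<sigma> (EmptyA x) = (\<forall>z. \<not> mem z (\<sigma> x))"
| "mls_atom_holds mem \<sigma> (EqA x y) = (\<sigma> x = \<sigma> y)"
| "mls_atom_holds mem \<sigma> (SubA x y) = (\<forall>z. mem z (\<sigma> x) \<longrightarrow> mem z (\<sigma> y))"
| "mls_atom_holds mem \<sigma> (MemA x y) = mem (\<sigma> x) (\<sigma> y)"
| "mls_atom_holds mem \<sigma> (DiffA x y w) = (\<forall>z. mem z (\<sigma> x) \<longleftrightarrow> mem z (\<sigma> y) \<and> \<not> mem z (\<sigma> w))"
| "mls_atom_holds mem \<sigma> (UnA x y w) = (\<forall>z. mem z (\<sigma> x) \<longleftrightarrow> mem z (\<sigma> y) \<or> mem z (\<sigma> w))"
| "mls_atom_holds mem \<sigma> (IntA x y w) = (\<forall>z. mem z (\<sigma> x) \<longleftrightarrow> mem z (\<sigma> y) \<and> mem z (\<sigma> w))"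

fun mls_lit_holds :: "('v \<Rightarrow> 'v \<Rightarrow> bool) \<Rightarrow> ('x \<Rightarrow> 'v) \<Rightarrow> 'x mls_lit \<Rightarrow> bool" where
  "mls_lit_holds mem \<sigma> (Pos a) = mls_atom_holds mem \<sigma> a"
| "mls_lit_holds mem \<sigma> (Neg a) = (\<not> mls_atom_holds mem \<sigma> a)"

fun mls_atom_vars :: "'x mls_atom \<Rightarrow> 'x set" where
  "mls_atom_vars (EmptyA x) = {x}"
| "mls_atom_vars (EqA x y) = {x, y}"
| "mls_atom_vars (SubA x y) = {x, y}"
| "mls_atom_vars (MemA x y) = {x, y}"
| "mls_atom_vars (DiffA x y w) = {x, y, w}"
| "mls_atom_vars (UnA x y w) = {x, y, w}"
| "mls_atom_vars (IntA x y w) = {x, y, w}"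

fun mls_lit_vars :: "'x mls_lit \<Rightarrow> 'x set" where
  "mls_lit_vars (Pos a) = mls_atom_vars a"
| "mls_lit_vars (Neg a) = mls_atom_vars a"

text \<open>A quantifier-free theory: a type of literals 'lit over variables 'var, with a
  satisfaction relation holds (assignment, literal) and the finite set of variables of
  each literal; satisfaction of a literal depends only on the values of its variables.\<close>

definition qf_theory :: "(('var \<Rightarrow> 'v) \<Rightarrow> 'lit \<Rightarrow> bool) \<Rightarrow> ('lit \<Rightarrow> 'var set) \<Rightarrow> bool" where
  "qf_theory holds vars \<longleftrightarrow>
     (\<forall>l. finite (vars l)) \<and>
     (\<forall>l \<sigma> \<tau>. (\<forall>x\<in>vars l. \<sigma> x = \<tau> x) \<longrightarrow> holds \<sigma> l = holds \<tau> l)"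

definition extends_MLS ::
  "('v \<Rightarrow> 'v \<Rightarrow> bool) \<Rightarrow> (('var \<Rightarrow> 'v) \<Rightarrow> 'lit \<Rightarrow> bool) \<Rightarrow> ('lit \<Rightarrow> 'var set)
     \<Rightarrow> ('var mls_lit \<Rightarrow> 'lit) \<Rightarrow> bool" where
  "extends_MLS mem holds vars emb \<longleftrightarrow>
     (\<forall>l \<sigma>. holds \<sigma> (emb l) = mls_lit_holds mem \<sigma> l) \<and>
     (\<forall>l. vars (emb l) = mls_lit_vars l)"

definition sat :: "(('var \<Rightarrow> 'v) \<Rightarrow> 'lit \<Rightarrow> bool) \<Rightarrow> ('var \<Rightarrow> 'v) \<Rightarrow> 'lit list \<Rightarrow> bool" where
  "sat holds \<sigma> \<phi> \<longleftrightarrow> (\<forall>l\<in>set \<phi>. holds \<sigma> l)"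

definition convex :: "(('var \<Rightarrow> 'v) \<Rightarrow> 'lit \<Rightarrow> bool) \<Rightarrow> bool" where
  "convex holds \<longleftrightarrow>
     (\<forall>(\<psi> :: 'lit list) (E :: ('var \<times> 'var) set).
        finite E \<and> E \<noteq> {} \<and>
        (\<forall>\<sigma>. sat holds \<sigma> \<psi> \<longrightarrow> (\<exists>(x, y)\<in>E. \<sigma> x = \<sigma> y)) \<longrightarrow>
        (\<exists>(x, y)\<in>E. \<forall>\<sigma>. sat holds \<sigma> \<psi> \<longrightarrow> \<sigma> x = \<sigma> y))"

end

theory Submission
  imports Defs
begin

text \<open>Adjoin to \<open>\<phi>\<close> the literals \<open>y\<^sub>i \<in> xbar\<close> (\<open>i = 0, \<dots>, k\<close>) for fresh variables \<open>y\<^sub>i\<close>.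
  Since \<open>xbar\<close> has at most \<open>k\<close> elements in every model of \<open>\<phi>\<close>, every model of the extended
  conjunction identifies two of the \<open>y\<^sub>i\<close>, so it entails the disjunction of all \<open>y\<^sub>i = y\<^sub>j\<close>
  with \<open>i \<noteq> j\<close>. No single disjunct is entailed: take a model of \<open>\<phi>\<close> in which \<open>xbar\<close> has two
  distinct elements \<open>a\<close> and \<open>b\<close>, and send \<open>y\<^sub>i\<close> to \<open>b\<close> and every other \<open>y\<^sub>j\<close> to \<open>a\<close>.\<close>

lemma two_le_card_ex_distinct:
  assumes "2 \<le> card A"
  shows "\<exists>a\<in>A. \<exists>b\<in>A. a \<noteq> b"
proof -
  have "finite A" and "\<not> card A \<le> Suc 0"
    using assms card.infinite by fastforce+
  then show ?thesis
    using card_le_Suc0_iff_eq by blast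
qed

lemma infinite_UNIV_fresh_list:
  assumes "infinite (UNIV :: 'a set)" and "finite F"
  shows "\<exists>ys :: 'a list. card (set ys) = n \<and> set ys \<inter> F = {}"
proof -
  obtain Y where Y: "finite Y" "card Y = n" "Y \<subseteq> UNIV - F"
    using infinite_arbitrarily_large[of "UNIV - F" n] assms by auto
  obtain ys where "set ys = Y"
    using finite_list[OF Y(1)] by blast
  with Y show ?thesis
    by auto
qed

lemma sat_append [simp]: "sat holds \<sigma> (\<phi> @ \<psi>) \<longleftrightarrow> sat holds \<sigma> \<phi> \<and> sat holds \<sigma> \<psi>"
  unfolding sat_def by auto

lemma qf_theory_finite_vars:
  assumes "qf_theory holds vars"
  shows "finite (\<Union>l\<in>set \<phi>. vars l)"
  using assms unfolding qf_theory_def by auto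

lemma qf_theory_sat_cong:
  assumes "qf_theory holds vars" and "\<forall>v\<in>(\<Union>l\<in>set \<phi>. vars l). \<sigma> v = \<tau> v"
  shows "sat holds \<sigma> \<phi> \<longleftrightarrow> sat holds \<tau> \<phi>"
  using assms unfolding qf_theory_def sat_def by blast

lemma not_convexI:
  assumes "finite E" and "E \<noteq> {}"
    and "\<forall>\<sigma>. sat holds \<sigma> \<psi> \<longrightarrow> (\<exists>(x, y)\<in>E. \<sigma> x = \<sigma> y)"
    and "\<forall>(x, y)\<in>E. \<exists>\<sigma>. sat holds \<sigma> \<psi> \<and> \<sigma> x \<noteq> \<sigma> y"
  shows "\<not> convex holds"
proof
  assume "convex holds"
  then have "\<exists>(x, y)\<in>E. \<forall>\<sigma>. sat holds \<sigma> \<psi> \<longrightarrow> \<sigma> x = \<sigma> y"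
    using assms(1-3) unfolding convex_def by simp
  with assms(4) show False
    by fastforce
qed

definition member_lits :: "('var mls_lit \<Rightarrow> 'lit) \<Rightarrow> 'var \<Rightarrow> 'var list \<Rightarrow> 'lit list" where
  "member_lits emb x ys = map (\<lambda>y. emb (Pos (MemA y x))) ys"

lemma sat_member_lits:
  assumes "extends_MLS mem holds vars emb"
  shows "sat holds \<sigma> (member_lits emb x ys) \<longleftrightarrow> (\<forall>y\<in>set ys. mem (\<sigma> y) (\<sigma> x))"
  using assms unfolding extends_MLS_def member_lits_def sat_def by simp

lemma sat_member_lits_collision:
  assumes "extends_MLS mem holds vars emb"
    and "\<forall>\<sigma>. sat holds \<sigma> \<phi> \<longrightarrow> finite (elems mem (\<sigma> x)) \<and> card (elems mem (\<sigma> x)) \<le> k"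
    and "k < card (set ys)"
    and "sat holds \<sigma> (\<phi> @ member_lits emb x ys)"
  shows "\<exists>(u, v)\<in>set ys \<times> set ys - Id. \<sigma> u = \<sigma> v"
proof -
  have members: "\<sigma> ` set ys \<subseteq> elems mem (\<sigma> x)"
    using assms(1,4) by (auto simp: sat_member_lits elems_def)
  have finite: "finite (elems mem (\<sigma> x))" and bound: "card (elems mem (\<sigma> x)) \<le> k"
    using assms(2,4) by auto
  have "\<not> inj_on \<sigma> (set ys)"
  proof
    assume "inj_on \<sigma> (set ys)"
    from card_inj_on_le[OF this members finite] bound assms(3) show False
      by simp
  qed
  then show ?thesis
    unfolding inj_on_def by blast
qed

lemma sat_member_lits_fresh:
  assumes "qf_theory holds vars" and "extends_MLS mem holds vars emb"
    and "sat holds \<sigma> \<phi>"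
    and "set ys \<inter> insert x (\<Union>l\<in>set \<phi>. vars l) = {}"
    and "\<forall>y\<in>set ys. mem (g y) (\<sigma> x)"
  shows "sat holds (\<lambda>v. if v \<in> set ys then g v else \<sigma> v) (\<phi> @ member_lits emb x ys)"
proof -
  let ?\<tau> = "\<lambda>v. if v \<in> set ys then g v else \<sigma> v"
  have "\<forall>v\<in>(\<Union>l\<in>set \<phi>. vars l). ?\<tau> v = \<sigma> v"
    using assms(4) by auto
  then have "sat holds ?\<tau> \<phi> \<longleftrightarrow> sat holds \<sigma> \<phi>"
    by (rule qf_theory_sat_cong[OF assms(1)])
  with assms(3) have "sat holds ?\<tau> \<phi>"
    by simp
  moreover have "sat holds ?\<tau> (member_lits emb x ys)"
    using assms(4,5) by (auto simp: sat_member_lits[OF assms(2)])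
  ultimately show ?thesis
    by simp
qed

lemma sat_member_lits_separate:
  assumes "qf_theory holds vars" and "extends_MLS mem holds vars emb"
    and "sat holds \<sigma> \<phi>"
    and "set ys \<inter> insert x (\<Union>l\<in>set \<phi>. vars l) = {}"
    and "mem a (\<sigma> x)" and "mem b (\<sigma> x)" and "a \<noteq> b"
    and "u \<in> set ys" and "v \<in> set ys" and "u \<noteq> v"
  shows "\<exists>\<tau>. sat holds \<tau> (\<phi> @ member_lits emb x ys) \<and> \<tau> u \<noteq> \<tau> v"
proof -
  let ?\<tau> = "\<lambda>w. if w \<in> set ys then if w = u then b else a else \<sigma> w"
  have "sat holds ?\<tau> (\<phi> @ member_lits emb x ys)"
    using sat_member_lits_fresh[OF assms(1-4), of "\<lambda>y. if y = u then b else a"] assms(5,6)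
    by simp
  moreover have "?\<tau> u \<noteq> ?\<tau> v"
    using assms(7-10) by simp
  ultimately show ?thesis
    by blast
qed

theorem lemma13:
  fixes mem :: "'v \<Rightarrow> 'v \<Rightarrow> bool"
    and holds :: "('var \<Rightarrow> 'v) \<Rightarrow> 'lit \<Rightarrow> bool"
    and vars :: "'lit \<Rightarrow> 'var set"
    and emb :: "'var mls_lit \<Rightarrow> 'lit"
    and \<phi> :: "'lit list"
    and xbar :: 'var
    and k :: nat
  assumes "set_universe mem"
    and "infinite (UNIV :: 'var set)"
    and "qf_theory holds vars"
    and "extends_MLS mem holds vars emb"
    and "k \<ge> 2"
    and "\<forall>\<sigma>. sat holds \<sigma> \<phi> \<longrightarrow> finite (elems mem (\<sigma> xbar)) \<and> card (elems mem (\<sigma> xbar)) \<le> k"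
    and "\<exists>\<sigma>. sat holds \<sigma> \<phi> \<and> finite (elems mem (\<sigma> xbar)) \<and> card (elems mem (\<sigma> xbar)) = k"
  shows "\<not> convex holds"
proof -
  obtain \<sigma> a b where \<sigma>: "sat holds \<sigma> \<phi>" and ab: "mem a (\<sigma> xbar)" "mem b (\<sigma> xbar)" "a \<noteq> b"
    using assms(5,7) two_le_card_ex_distinct[of "elems mem _"] unfolding elems_def by fastforce
  obtain ys where ys: "card (set ys) = Suc k" "set ys \<inter> insert xbar (\<Union>l\<in>set \<phi>. vars l) = {}"
    using infinite_UNIV_fresh_list[OF assms(2)] qf_theory_finite_vars[OF assms(3)] by blast
  let ?E = "set ys \<times> set ys - Id"
  show ?thesis
  proof (rule not_convexI)
    show "finite ?E"
      by simp
    show "?E \<noteq> {}"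
      using two_le_card_ex_distinct[of "set ys"] ys(1) assms(5) by auto
    show "\<forall>\<tau>. sat holds \<tau> (\<phi> @ member_lits emb xbar ys) \<longrightarrow> (\<exists>(u, v)\<in>?E. \<tau> u = \<tau> v)"
      using sat_member_lits_collision[OF assms(4,6)] ys(1) by simp
    show "\<forall>(u, v)\<in>?E. \<exists>\<tau>. sat holds \<tau> (\<phi> @ member_lits emb xbar ys) \<and> \<tau> u \<noteq> \<tau> v"
      using sat_member_lits_separate[OF assms(3,4) \<sigma> ys(2) ab] by blast
  qed
qed

end
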